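(* Let $r>1$ and $s>1$ be coprime integers. Suppose $G$ is a finite group containing elements $x$ and $y$ such that $x^r$ is conjugate to $y^r$ in $G$ and $x^s$ is conjugate to $y^s$ in $G$, but $x^d$ is not conjugate to $y^d$ in $G$ for every proper divisor $d$ of $r$ and every proper divisor $d$ of $s$. Then $|G|$ is divisible by $rs$ and $|G|\neq rs$. If $rs$ is even, then $|G|\neq 2rs$, and if $rs\equiv 2\pmod 4$, then $|G|$ is divisible by $2rs$.
   Context: A proper divisor of a positive integer $n$ is a positive divisor of $n$ strictly less than $n$. *)

theory Defs
  imports "HOL-Algebra.Algebra"
begin

definition conjugate_in :: "('a, 'b) monoid_scheme \<Rightarrow> 'a \<Rightarrow> 'a \<Rightarrow> bool" where
  "conjugate_in G a b \<longleftrightarrow> (\<exists>g\<in>carrier G. inv\<^bsub>G\<^esub> g \<otimes>\<^bsub>G\<^esub> a \<otimes>\<^bsub>G\<^esub> g = b)"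

definition proper_divisors :: "nat \<Rightarrow> nat set" where
  "proper_divisors n = {d. 0 < d \<and> d dvd n \<and> d < n}"

end

theory Submission
  imports Defs
begin

text \<open>
  Conjugation by a fixed g is an automorphism, so the exponents k for which g conjugates x^k to
  y^k are closed under gcd. With r, s coprime this gives ord x = ord y =: n, and the minimality
  of r and s forces r, s | n, so rs | n | |G|. If n = |G| the group is cyclic, hence abelian, and
  x^r = y^r, x^s = y^s give x = y.

  For the remaining claims let r = 2r' be the even one of r, s and n = 2r'q. Since
  gcd(2r', r'q) = r' for odd q, a single g conjugating both x^r to y^r and x^(n/2) to y^(n/2)
  would conjugate x^r' to y^r', contradicting minimality. If |G| = 2rs, then n = rs, so <x> has
  index 2; it is normal and contains y, and x^(n/2) = y^(n/2) is its unique involution, fixed by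
  every conjugation. If rs = 2 mod 4 but 2rs does not divide |G|, then 4 does not divide |G|.
  Then any two involutions a, b of a subgroup K are conjugate in K: a inverts u = ab, and ord u
  is odd, since otherwise u^(ord u/2) would be an involution commuting with a and generating a
  Klein four-group with it. Applied to x^(n/2) and y^(n/2), transported into the centralizer of
  y^r, this supplies the required g.
\<close>

lemma (in group) conj_mult:
  assumes "g \<in> carrier G" "a \<in> carrier G" "b \<in> carrier G"
  shows "inv g \<otimes> (a \<otimes> b) \<otimes> g = (inv g \<otimes> a \<otimes> g) \<otimes> (inv g \<otimes> b \<otimes> g)"
  using assms by (simp add: m_assoc) (simp add: m_assoc[symmetric])

lemma (in group) conj_nat_pow:
  assumes "g \<in> carrier G" "a \<in> carrier G"
  shows "inv g \<otimes> a [^] (k::nat) \<otimes> g = (inv g \<otimes> a \<otimes> g) [^] k"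
  by (induction k) (simp_all add: assms conj_mult)

lemma (in group) conj_by_mult:
  assumes "g \<in> carrier G" "h \<in> carrier G" "c \<in> carrier G"
  shows "inv (g \<otimes> h) \<otimes> c \<otimes> (g \<otimes> h) = inv h \<otimes> (inv g \<otimes> c \<otimes> g) \<otimes> h"
  using assms by (simp add: inv_mult_group m_assoc)

lemma (in group) conj_eq_one_iff:
  assumes "g \<in> carrier G" "a \<in> carrier G"
  shows "inv g \<otimes> a \<otimes> g = \<one> \<longleftrightarrow> a = \<one>"
proof
  assume "inv g \<otimes> a \<otimes> g = \<one>"
  then have "g \<otimes> (inv g \<otimes> a \<otimes> g) \<otimes> inv g = \<one>"
    using assms by simp
  then show "a = \<one>"
    using assms by (simp add: conjugation_is_surj)
qed (use assms in simp)

lemma (in group) ord_conj: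
  assumes "g \<in> carrier G" "a \<in> carrier G"
  shows "ord (inv g \<otimes> a \<otimes> g) = ord a"
proof -
  have "(inv g \<otimes> a \<otimes> g) [^] n = \<one> \<longleftrightarrow> a [^] n = \<one>" for n :: nat
    using assms by (simp add: conj_nat_pow[symmetric] conj_eq_one_iff)
  then show ?thesis
    using assms by (simp add: ord_unique pow_eq_id)
qed

lemma (in group) conjugate_in_refl:
  "a \<in> carrier G \<Longrightarrow> conjugate_in G a a"
  unfolding conjugate_in_def by (intro bexI[of _ \<one>]) auto

lemma (in group) conjugate_in_sym:
  assumes "a \<in> carrier G" "conjugate_in G a b"
  shows "conjugate_in G b a"
proof -
  obtain g where g: "g \<in> carrier G" "inv g \<otimes> a \<otimes> g = b"
    using assms unfolding conjugate_in_def by blast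
  then have "inv (inv g) \<otimes> b \<otimes> inv g = a"
    using assms(1) g(1) by (simp add: conjugation_is_surj flip: g(2))
  then show ?thesis
    unfolding conjugate_in_def using g(1) by blast
qed

lemma (in comm_group) conjugate_in_imp_eq:
  assumes "a \<in> carrier G" "conjugate_in G a b"
  shows "a = b"
  using assms unfolding conjugate_in_def by (auto simp: m_comm[of _ a] m_assoc)

lemma (in group) conj_pow_gcd:
  assumes g: "g \<in> carrier G" and x: "x \<in> carrier G" and y: "y \<in> carrier G"
    and a: "inv g \<otimes> x [^] (a::nat) \<otimes> g = y [^] a"
    and b: "inv g \<otimes> x [^] (b::nat) \<otimes> g = y [^] b"
  shows "inv g \<otimes> x [^] gcd a b \<otimes> g = y [^] gcd a b"
proof (cases "a = 0")
  case True
  with b show ?thesis by simp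
next
  case False
  then obtain u v where uv: "a * u = b * v + gcd a b"
    using bezout_nat by blast
  have multiple: "inv g \<otimes> x [^] (c * k) \<otimes> g = y [^] (c * k)"
    if "inv g \<otimes> x [^] c \<otimes> g = y [^] c" for c k :: nat
    using that g x y by (simp add: nat_pow_pow[symmetric] conj_nat_pow)
  have split: "z [^] (a * u) = z [^] (b * v) \<otimes> z [^] gcd a b" if "z \<in> carrier G" for z
    using that by (simp add: uv nat_pow_mult)
  have "y [^] (b * v) \<otimes> y [^] gcd a b = inv g \<otimes> x [^] (a * u) \<otimes> g"
    using multiple[OF a] y by (simp add: split)
  also have "\<dots> = y [^] (b * v) \<otimes> (inv g \<otimes> x [^] gcd a b \<otimes> g)"
    using multiple[OF b] g x by (simp add: split conj_mult)
  finally have "y [^] (b * v) \<otimes> y [^] gcd a b = y [^] (b * v) \<otimes> (inv g \<otimes> x [^] gcd a b \<otimes> g)" .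
  then show ?thesis
    using g x y l_cancel[of "y [^] (b * v)" "y [^] gcd a b" "inv g \<otimes> x [^] gcd a b \<otimes> g"] by simp
qed

lemma (in group) conj_half_pow:
  assumes g: "g \<in> carrier G" and x: "x \<in> carrier G" and y: "y \<in> carrier G"
    and "inv g \<otimes> x [^] (2 * r) \<otimes> g = y [^] (2 * (r::nat))"
    and "inv g \<otimes> x [^] (r * q) \<otimes> g = y [^] (r * q)" and "odd q"
  shows "inv g \<otimes> x [^] r \<otimes> g = y [^] r"
proof -
  have "gcd (2 * r) (r * q) = r"
    using \<open>odd q\<close> by (simp add: mult.commute[of 2] gcd_mult_distrib_nat[symmetric])
  then show ?thesis
    using conj_pow_gcd[OF assms(1-5)] by simp
qed

lemma (in group) eq_of_coprime_pows_eq: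
  assumes x: "x \<in> carrier G" and y: "y \<in> carrier G" and "coprime r s"
    and "x [^] (r::nat) = y [^] r" and "x [^] (s::nat) = y [^] s"
  shows "x = y"
  using conj_pow_gcd[OF one_closed x y, of r s] assms by (simp add: coprime_iff_gcd_eq_1)

lemma (in group) subgroup_nat_pow_closed:
  "subgroup H G \<Longrightarrow> h \<in> H \<Longrightarrow> h [^] (k::nat) \<in> H"
  using subgroup_int_pow_closed[of H h "int k"] by (simp add: int_pow_int)

lemma (in group) subgroup_pow_gcd_mem:
  assumes H: "subgroup H G" and y: "y \<in> carrier G"
    and a: "y [^] (a::nat) \<in> H" and b: "y [^] (b::nat) \<in> H"
  shows "y [^] gcd a b \<in> H"
proof (cases "a = 0")
  case True
  with b show ?thesis by simp
next
  case False
  then obtain u v where uv: "a * u = b * v + gcd a b"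
    using bezout_nat by blast
  have multiple: "y [^] (c * k) \<in> H" if "y [^] c \<in> H" for c k :: nat
    using subgroup_nat_pow_closed[OF H that, of k] y by (simp add: nat_pow_pow)
  have "y [^] gcd a b = inv (y [^] (b * v)) \<otimes> y [^] (a * u)"
    using y by (simp add: uv nat_pow_mult[symmetric] m_assoc[symmetric])
  then show ?thesis
    using multiple[OF a] multiple[OF b] H by (simp add: subgroup.m_closed subgroup.m_inv_closed)
qed

definition centralizer :: "('a, 'b) monoid_scheme \<Rightarrow> 'a \<Rightarrow> 'a set"
  where "centralizer G w = {h \<in> carrier G. h \<otimes>\<^bsub>G\<^esub> w = w \<otimes>\<^bsub>G\<^esub> h}"

lemma (in group) subgroup_centralizer:
  assumes w: "w \<in> carrier G"
  shows "subgroup (centralizer G w) G"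
proof (rule subgroupI)
  show "centralizer G w \<subseteq> carrier G" "centralizer G w \<noteq> {}"
    using w by (auto simp: centralizer_def)
  show "inv h \<in> centralizer G w" if "h \<in> centralizer G w" for h
  proof -
    have h: "h \<in> carrier G" "h \<otimes> w = w \<otimes> h"
      using that by (simp_all add: centralizer_def)
    have "inv h \<otimes> w = inv h \<otimes> (w \<otimes> h) \<otimes> inv h"
      using h(1) w by (simp add: m_assoc)
    also have "\<dots> = w \<otimes> inv h"
      using h(1) w by (simp add: m_assoc[symmetric] flip: h(2))
    finally show ?thesis
      using h(1) by (simp add: centralizer_def)
  qed
  show "h \<otimes> k \<in> centralizer G w" if "h \<in> centralizer G w" "k \<in> centralizer G w" for h k
  proof -
    have h: "h \<in> carrier G" "h \<otimes> w = w \<otimes> h" and k: "k \<in> carrier G" "k \<otimes> w = w \<otimes> k"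
      using that by (simp_all add: centralizer_def)
    have "h \<otimes> k \<otimes> w = h \<otimes> w \<otimes> k"
      using h(1) k w by (simp add: m_assoc)
    also have "\<dots> = w \<otimes> (h \<otimes> k)"
      using h k w by (simp add: m_assoc)
    finally show ?thesis
      using h(1) k(1) by (simp add: centralizer_def)
  qed
qed

lemma (in group) index_two_inv_mult_mem:
  assumes fin: "finite (carrier G)" and H: "subgroup H G" and index: "2 * card H = order G"
    and g: "g \<in> carrier G" "g \<notin> H" and h: "h \<in> carrier G" "h \<notin> H"
  shows "inv g \<otimes> h \<in> H"
proof -
  have H_carrier: "H \<subseteq> carrier G"
    using H subgroup.subset by blast
  have "(\<otimes>) g ` H \<subseteq> carrier G - H"
  proof
    fix b assume "b \<in> (\<otimes>) g ` H"
    then obtain a where a: "a \<in> H" "b = g \<otimes> a" by auto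
    have "b \<notin> H"
    proof
      assume "b \<in> H"
      then have "b \<otimes> inv a \<in> H"
        using a H by (simp add: subgroup.m_closed subgroup.m_inv_closed)
      moreover have "b \<otimes> inv a = g"
        using a g H_carrier by (auto simp: m_assoc)
      ultimately show False
        using g by simp
    qed
    then show "b \<in> carrier G - H"
      using a g H_carrier by auto
  qed
  moreover have "card ((\<otimes>) g ` H) = card (carrier G - H)"
  proof -
    have "inj_on ((\<otimes>) g) H"
      using g H_carrier by (auto intro: inj_onI simp: subset_iff)
    then show ?thesis
      using index fin H_carrier by (simp add: card_image card_Diff_subset order_def finite_subset)
  qed
  ultimately have "(\<otimes>) g ` H = carrier G - H"
    using fin by (simp add: card_subset_eq)
  then obtain a where "a \<in> H" "h = g \<otimes> a"
    using h by blast
  then show ?thesis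
    using g H_carrier by (auto simp: m_assoc[symmetric])
qed

lemma (in group) index_two_conj_closed:
  assumes fin: "finite (carrier G)" and H: "subgroup H G" and index: "2 * card H = order G"
    and g: "g \<in> carrier G" and a: "a \<in> H"
  shows "inv g \<otimes> a \<otimes> g \<in> H"
proof (cases "g \<in> H")
  case True
  then show ?thesis
    using a H by (simp add: subgroup.m_closed subgroup.m_inv_closed)
next
  case False
  have a_carrier: "a \<in> carrier G"
    using a H subgroup.subset by blast
  have "a \<otimes> g \<notin> H"
  proof
    assume "a \<otimes> g \<in> H"
    then have "inv a \<otimes> (a \<otimes> g) \<in> H"
      using a H by (simp add: subgroup.m_closed subgroup.m_inv_closed)
    then show False
      using False a_carrier g by (simp add: m_assoc[symmetric])
  qed
  then show ?thesis
    using index_two_inv_mult_mem[OF fin H index g False] a_carrier g by (simp add: m_assoc)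
qed

lemma (in group) index_two_square_mem:
  assumes fin: "finite (carrier G)" and H: "subgroup H G" and index: "2 * card H = order G"
    and g: "g \<in> carrier G"
  shows "g [^] (2::nat) \<in> H"
proof (cases "g \<in> H")
  case True
  then show ?thesis
    using H by (simp add: numeral_2_eq_2 subgroup.m_closed subgroup.mem_carrier)
next
  case False
  then have "inv g \<notin> H"
    using H g by (metis inv_inv subgroup.m_inv_closed)
  then have "inv (inv g) \<otimes> g \<in> H"
    using index_two_inv_mult_mem[OF fin H index _ \<open>inv g \<notin> H\<close> g False] g by simp
  then show ?thesis
    using g by (simp add: numeral_2_eq_2)
qed

lemma (in group) comm_group_of_ord_eq_order:
  assumes fin: "finite (carrier G)" and x: "x \<in> carrier G" and ord: "ord x = order G"
  shows "comm_group G"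
proof -
  have "generate G {x} \<subseteq> carrier G"
    using x by (simp add: generate_incl)
  moreover have "card (generate G {x}) = card (carrier G)"
    using ord by (simp add: generate_pow_card[OF x, symmetric] order_def)
  ultimately have "generate G {x} = carrier G"
    using fin by (simp add: card_subset_eq)
  then have powers: "\<exists>k::nat. a = x [^] k" if "a \<in> carrier G" for a
    using that generate_pow_on_finite_carrier[OF fin x] by auto
  show ?thesis
  proof (rule group_comm_groupI)
    fix a b assume "a \<in> carrier G" "b \<in> carrier G"
    then obtain i j :: nat where "a = x [^] i" "b = x [^] j"
      using powers by blast
    then show "a \<otimes> b = b \<otimes> a"
      using x by (simp add: nat_pow_mult add.commute)
  qed
qed

lemma (in group) pow_half_ord_eq:
  assumes x: "x \<in> carrier G" and even: "even (ord x)" and ord: "ord (x [^] (j::nat)) = ord x"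
  shows "(x [^] j) [^] (ord x div 2) = x [^] (ord x div 2)"
proof (cases "ord x = 0")
  case True
  then show ?thesis by simp
next
  case False
  have "j \<noteq> 0"
  proof
    assume "j = 0"
    then have "ord x = 1"
      using ord by simp
    then show False
      using even by simp
  qed
  then have "gcd (ord x) j = 1"
    using ord False by (simp add: ord_pow_gen[OF x] div_eq_dividend_iff)
  then have "odd j"
    using even gcd_greatest[of 2 "ord x" j] by auto
  then obtain l where l: "j = 2 * l + 1"
    by (rule oddE)
  have "j * (ord x div 2) = ord x * l + ord x div 2"
    using even l by (simp add: algebra_simps)
  then show ?thesis
    using x by (simp add: nat_pow_pow nat_pow_mult[symmetric] nat_pow_pow[symmetric, of x "ord x"])
qed

lemma (in group) ord_eq_2_iff:
  assumes a: "a \<in> carrier G"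
  shows "ord a = 2 \<longleftrightarrow> a \<otimes> a = \<one> \<and> a \<noteq> \<one>"
proof -
  have "a \<otimes> a = \<one> \<longleftrightarrow> ord a dvd 2"
    using a by (simp add: numeral_2_eq_2 pow_eq_id[symmetric])
  moreover have "ord a dvd 2 \<and> ord a \<noteq> 1 \<longleftrightarrow> ord a = 2"
    using dvd_imp_le[of "ord a" 2] by (auto simp: le_Suc_eq numeral_2_eq_2)
  ultimately show ?thesis
    using ord_eq_1[OF a] by blast
qed

lemma (in group) four_dvd_order_of_commuting_involutions:
  assumes a: "a \<in> carrier G" and z: "z \<in> carrier G" and "ord a = 2" and "ord z = 2"
    and comm: "a \<otimes> z = z \<otimes> a" and "a \<noteq> z"
  shows "4 dvd order G"
proof -
  have aa: "a \<otimes> a = \<one>" "a \<noteq> \<one>" and zz: "z \<otimes> z = \<one>" "z \<noteq> \<one>"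
    using assms by (simp_all add: ord_eq_2_iff)
  have inv: "inv a = a" "inv z = z"
    using inv_equality[OF aa(1) a a] inv_equality[OF zz(1) z z] by simp_all
  let ?K = "{\<one>, a, z, a \<otimes> z}"
  have "subgroup ?K G"
  proof (rule subgroupI)
    show "?K \<subseteq> carrier G" "?K \<noteq> {}"
      using a z by auto
    show "inv p \<in> ?K" if "p \<in> ?K" for p
      using that a z inv comm by (auto simp: inv_mult_group)
    have cancel: "a \<otimes> (a \<otimes> c) = c" "z \<otimes> (z \<otimes> c) = c" "z \<otimes> (a \<otimes> c) = a \<otimes> (z \<otimes> c)"
      if "c \<in> carrier G" for c
      using that a z aa zz comm by (simp_all add: m_assoc[symmetric])
    show "p \<otimes> p' \<in> ?K" if "p \<in> ?K" "p' \<in> ?K" for p p'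
      using that a z aa zz comm[symmetric] cancel by (auto simp: m_assoc)
  qed
  moreover have "card ?K = 4"
  proof -
    have "a \<otimes> z \<noteq> \<one>"
      using inv_equality[of a z] a z inv \<open>a \<noteq> z\<close> by auto
    moreover have "a \<otimes> z \<noteq> a" "a \<otimes> z \<noteq> z"
      using a z aa(2) zz(2) by (simp_all add: r_cancel_one' l_cancel_one')
    ultimately show ?thesis
      using aa(2) zz(2) \<open>a \<noteq> z\<close> by auto
  qed
  ultimately show ?thesis
    using lagrange by (metis dvd_triv_right)
qed

lemma (in group) inverting_nat_pow:
  assumes a: "a \<in> carrier G" and u: "u \<in> carrier G" and inverts: "a \<otimes> u = inv u \<otimes> a"
  shows "a \<otimes> u [^] (j::nat) = inv (u [^] j) \<otimes> a"
proof (induction j)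
  case 0
  then show ?case
    using a by simp
next
  case (Suc j)
  have "a \<otimes> u [^] Suc j = inv (u [^] j) \<otimes> (a \<otimes> u)"
    using Suc a u by (simp add: m_assoc[symmetric])
  also have "\<dots> = inv (u \<otimes> u [^] j) \<otimes> a"
    using inverts a u by (simp add: m_assoc inv_mult_group)
  also have "u \<otimes> u [^] j = u [^] Suc j"
    by (rule nat_pow_Suc2[OF u, symmetric])
  finally show ?case .
qed

lemma (in group) involution_inverting_eq_pow_half_ord:
  assumes not4: "\<not> 4 dvd order G" and a: "a \<in> carrier G" "ord a = 2"
    and u: "u \<in> carrier G" and inverts: "a \<otimes> u = inv u \<otimes> a"
    and "ord u = 2 * l" and "l > 0"
  shows "a = u [^] l"
proof (rule ccontr)
  assume "a \<noteq> u [^] l"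
  have z: "ord (u [^] l) = 2"
    using \<open>ord u = 2 * l\<close> \<open>l > 0\<close> u by (simp add: ord_pow)
  then have "inv (u [^] l) = u [^] l"
    using u by (simp add: ord_eq_2_iff inv_equality)
  then have "a \<otimes> u [^] l = u [^] l \<otimes> a"
    using inverting_nat_pow[OF a(1) u inverts] by simp
  then show False
    using four_dvd_order_of_commuting_involutions[OF a(1) _ a(2) z] u \<open>a \<noteq> u [^] l\<close> not4
    by simp
qed

lemma (in group) involution_inverts_mult:
  assumes a: "a \<in> carrier G" "ord a = 2" and b: "b \<in> carrier G" "ord b = 2"
  shows "a \<otimes> (a \<otimes> b) = inv (a \<otimes> b) \<otimes> a"
proof -
  have aa: "a \<otimes> a = \<one>" and bb: "b \<otimes> b = \<one>"
    using ord_eq_2_iff[OF a(1)] ord_eq_2_iff[OF b(1)] a(2) b(2) by blast+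
  then have "inv (a \<otimes> b) = b \<otimes> a"
    using a(1) b(1) inv_equality[OF aa] inv_equality[OF bb] by (simp add: inv_mult_group)
  then show ?thesis
    using a(1) b(1) aa by (simp add: m_assoc[symmetric]) (simp add: m_assoc)
qed

lemma (in group) odd_ord_mult_involutions:
  assumes fin: "finite (carrier G)" and not4: "\<not> 4 dvd order G"
    and a: "a \<in> carrier G" "ord a = 2" and b: "b \<in> carrier G" "ord b = 2"
  shows "odd (ord (a \<otimes> b))"
proof
  define u where "u = a \<otimes> b"
  have u: "u \<in> carrier G"
    using a b by (simp add: u_def)
  have inverts: "a \<otimes> u = inv u \<otimes> a"
    unfolding u_def using involution_inverts_mult[OF a b] .
  assume "even (ord (a \<otimes> b))"
  then obtain l where l: "ord u = 2 * l"
    by (auto simp: u_def elim: evenE)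
  with ord_ge_1[OF fin u] have "l > 0"
    by simp
  with l have a_pow: "a = u [^] l"
    using involution_inverting_eq_pow_half_ord[OF not4 a u inverts] by blast
  then have "inv u \<otimes> a = u \<otimes> a"
    using inverts group_commutes_pow[of u u l] u by simp
  then have "inv u = u"
    using u a(1) by (simp add: right_cancel)
  then have "u [^] (2::nat) = \<one>"
    using u r_inv[OF u] by (simp add: numeral_2_eq_2)
  then have "l = 1"
    using l \<open>l > 0\<close> u pow_eq_id[of u 2] by (auto dest: dvd_imp_le)
  then have "b = \<one>"
    using a_pow a(1) b(1) by (simp add: u_def)
  then show False
    using b(2) by simp
qed

lemma (in group) involutions_conjugate_in_subgroup:
  assumes fin: "finite (carrier G)" and not4: "\<not> 4 dvd order G" and K: "subgroup K G"
    and a: "a \<in> K" "ord a = 2" and b: "b \<in> K" "ord b = 2"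
  shows "\<exists>h\<in>K. inv h \<otimes> a \<otimes> h = b"
proof -
  have a_carrier: "a \<in> carrier G" and b_carrier: "b \<in> carrier G"
    using a(1) b(1) subgroup.mem_carrier[OF K] by simp_all
  define u where "u = a \<otimes> b"
  have u: "u \<in> K" "u \<in> carrier G"
    using a b K a_carrier b_carrier by (simp_all add: u_def subgroup.m_closed)
  have au: "a \<otimes> u = b"
    using a_carrier b_carrier a(2) by (simp add: u_def m_assoc[symmetric] ord_eq_2_iff)
  obtain l where l: "ord u = 2 * l + 1"
    using odd_ord_mult_involutions[OF fin not4 a_carrier a(2) b_carrier b(2)]
    by (auto simp: u_def elim: oddE)
  have inverts: "a \<otimes> u = inv u \<otimes> a"
    unfolding u_def by (rule involution_inverts_mult[OF a_carrier a(2) b_carrier b(2)])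
  have conj_pow: "inv (u [^] j) \<otimes> a \<otimes> u [^] j = a \<otimes> u [^] (2 * j)" for j :: nat
    using inverting_nat_pow[OF a_carrier u(2) inverts, of j, symmetric] a_carrier u(2)
    by (simp add: m_assoc nat_pow_mult mult_2)
  have "inv (u [^] (l + 1)) \<otimes> a \<otimes> u [^] (l + 1) = a \<otimes> u [^] (ord u + 1)"
    using conj_pow[of "l + 1"] l by (simp add: algebra_simps)
  also have "\<dots> = b"
    using u(2) au by (simp add: nat_pow_mult[symmetric])
  finally show ?thesis
    using subgroup_nat_pow_closed[OF K u(1)] by blast
qed

lemma (in group) ord_dvd_mult_ord_of_conjugate_pows:
  assumes x: "x \<in> carrier G" and y: "y \<in> carrier G"
    and "conjugate_in G (x [^] (t::nat)) (y [^] t)"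
  shows "ord y dvd t * ord x"
proof -
  obtain g where g: "g \<in> carrier G" "inv g \<otimes> x [^] t \<otimes> g = y [^] t"
    using assms(3) unfolding conjugate_in_def by blast
  have "(x [^] t) [^] ord x = \<one>"
    using x by (simp add: nat_pow_pow mult.commute[of t] nat_pow_pow[symmetric])
  then have "ord (x [^] t) dvd ord x"
    using x by (simp add: pow_eq_id)
  moreover have "ord (y [^] t) = ord (x [^] t)"
    using g(1) x by (simp add: ord_conj flip: g(2))
  ultimately have "(y [^] t) [^] ord x = \<one>"
    using y by (simp add: pow_eq_id)
  then show ?thesis
    using y by (simp add: nat_pow_pow pow_eq_id)
qed

lemma (in group) ord_eq_of_conjugate_coprime_pows:
  assumes x: "x \<in> carrier G" and y: "y \<in> carrier G" and "coprime r s"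
    and "conjugate_in G (x [^] (r::nat)) (y [^] r)"
    and "conjugate_in G (x [^] (s::nat)) (y [^] s)"
  shows "ord y = ord x"
proof -
  have "ord b dvd ord a"
    if "a \<in> carrier G" "b \<in> carrier G"
      "conjugate_in G (a [^] r) (b [^] r)" "conjugate_in G (a [^] s) (b [^] s)" for a b
  proof -
    have "ord b dvd gcd (r * ord a) (s * ord a)"
      using that by (simp add: ord_dvd_mult_ord_of_conjugate_pows)
    also have "gcd (r * ord a) (s * ord a) = ord a"
      using \<open>coprime r s\<close> by (metis gcd_mult_distrib_nat mult.commute coprime_iff_gcd_eq_1 mult_1_right)
    finally show ?thesis .
  qed
  moreover have "conjugate_in G (y [^] r) (x [^] r)" "conjugate_in G (y [^] s) (x [^] s)"
    using x assms(4,5) by (simp_all add: conjugate_in_sym)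
  ultimately show ?thesis
    using assms by (meson dvd_antisym nat_pow_closed)
qed

lemma (in group) dvd_ord_of_conjugate_pow:
  assumes x: "x \<in> carrier G" and y: "y \<in> carrier G" and ord: "ord y = ord x"
    and "r > 0" and "conjugate_in G (x [^] r) (y [^] r)"
    and minimal: "\<And>d. d \<in> proper_divisors r \<Longrightarrow> \<not> conjugate_in G (x [^] d) (y [^] d)"
  shows "r dvd ord x"
proof (rule ccontr)
  assume "\<not> r dvd ord x"
  then have "gcd r (ord x) \<noteq> r"
    by (metis gcd_dvd2)
  then have "gcd r (ord x) \<in> proper_divisors r"
    using \<open>r > 0\<close> unfolding proper_divisors_def by (simp add: le_neq_implies_less)
  obtain g where g: "g \<in> carrier G" "inv g \<otimes> x [^] r \<otimes> g = y [^] r"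
    using assms(5) unfolding conjugate_in_def by blast
  have "inv g \<otimes> x [^] gcd r (ord x) \<otimes> g = y [^] gcd r (ord x)"
    by (rule conj_pow_gcd[OF g(1) x y g(2)]) (use g(1) x y pow_ord_eq_1[OF y] in \<open>simp add: ord\<close>)
  then show False
    using minimal[OF \<open>gcd r (ord x) \<in> proper_divisors r\<close>] g(1)
    unfolding conjugate_in_def by blast
qed

lemma (in group) conjugate_in_half_pow_of_index_two:
  assumes fin: "finite (carrier G)" and x: "x \<in> carrier G" and y: "y \<in> carrier G"
    and ord: "ord y = ord x" and index: "order G = 2 * ord x"
    and n: "ord x = 2 * r * q" and "odd q"
    and cr: "conjugate_in G (x [^] (2 * r)) (y [^] (2 * r))"
    and cq: "conjugate_in G (x [^] q) (y [^] q)"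
  shows "conjugate_in G (x [^] r) (y [^] r)"
proof -
  define H where "H = generate G {x}"
  have H: "H = {x [^] k | k. k \<in> (UNIV :: nat set)}"
    unfolding H_def using generate_pow_on_finite_carrier[OF fin x] .
  have sub: "subgroup H G"
    unfolding H_def using x by (simp add: generate_is_subgroup)
  have card: "2 * card H = order G"
    unfolding H_def using index by (simp add: generate_pow_card[OF x, symmetric])
  have "y [^] q \<in> H"
  proof -
    obtain g where "g \<in> carrier G" "inv g \<otimes> x [^] q \<otimes> g = y [^] q"
      using cq unfolding conjugate_in_def by blast
    moreover have "x [^] q \<in> H"
      using H by blast
    ultimately show ?thesis
      using index_two_conj_closed[OF fin sub card] by metis
  qed
  then have "y [^] gcd q 2 \<in> H"
    using subgroup_pow_gcd_mem[OF sub y] index_two_square_mem[OF fin sub card y] by blast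
  then obtain j where j: "y = x [^] (j::nat)"
    using \<open>odd q\<close> y H by (auto simp: coprime_iff_gcd_eq_1[symmetric])
  obtain g where g: "g \<in> carrier G" "inv g \<otimes> x [^] (2 * r) \<otimes> g = y [^] (2 * r)"
    using cr unfolding conjugate_in_def by blast
  have "inv g \<otimes> x [^] (ord x div 2) \<otimes> g = x [^] (ord x div 2)"
  proof -
    obtain e where e: "inv g \<otimes> x \<otimes> g = x [^] (e::nat)"
      using index_two_conj_closed[OF fin sub card g(1)] x H by (force simp: H_def generate.incl)
    then have "ord (x [^] e) = ord x"
      using ord_conj[OF g(1) x] by simp
    then show ?thesis
      using conj_nat_pow[OF g(1) x] e pow_half_ord_eq[OF x] n by simp
  qed
  also have "\<dots> = y [^] (ord x div 2)"
    using pow_half_ord_eq[OF x] j ord n by simp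
  finally have "inv g \<otimes> x [^] (r * q) \<otimes> g = y [^] (r * q)"
    using n by simp
  then show ?thesis
    using conj_half_pow[OF g(1) x y g(2)] \<open>odd q\<close> g(1) unfolding conjugate_in_def by blast
qed

lemma (in group) conjugate_in_half_pow_of_not_four_dvd:
  assumes fin: "finite (carrier G)" and not4: "\<not> 4 dvd order G"
    and x: "x \<in> carrier G" and y: "y \<in> carrier G" and ord: "ord y = ord x"
    and n: "ord x = 2 * r * q" and "odd q"
    and cr: "conjugate_in G (x [^] (2 * r)) (y [^] (2 * r))"
  shows "conjugate_in G (x [^] r) (y [^] r)"
proof -
  obtain g where g: "g \<in> carrier G" "inv g \<otimes> x [^] (2 * r) \<otimes> g = y [^] (2 * r)"
    using cr unfolding conjugate_in_def by blast
  define x' where "x' = inv g \<otimes> x \<otimes> g"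
  have x': "x' \<in> carrier G" "ord x' = ord x"
    using g(1) x by (simp_all add: x'_def ord_conj)
  have conj_x: "inv g \<otimes> x [^] k \<otimes> g = x' [^] k" for k :: nat
    using conj_nat_pow[OF g(1) x] by (simp add: x'_def)
  define w where "w = y [^] (2 * r)"
  have w: "w \<in> carrier G" "x' [^] (2 * r) = w"
    using y conj_x g(2) by (simp_all add: w_def)
  have "r * q > 0"
    using ord_ge_1[OF fin x] n by simp
  then have ord_half: "ord (z [^] (r * q)) = 2" if "z \<in> carrier G" "ord z = ord x" for z
    using that n by (simp add: ord_pow)
  have central: "z [^] (r * q) \<in> centralizer G w" if "z \<in> carrier G" "z [^] (2 * r) = w" for z
    using that by (auto simp: centralizer_def nat_pow_mult add.commute)
  obtain h where h: "h \<in> centralizer G w" "inv h \<otimes> x' [^] (r * q) \<otimes> h = y [^] (r * q)"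
    using involutions_conjugate_in_subgroup[OF fin not4 subgroup_centralizer[OF w(1)]
        central[OF x'(1) w(2)] ord_half[OF x'] central[OF y] ord_half[OF y ord]]
    by (auto simp: w_def)
  then have h_carrier: "h \<in> carrier G" and hw: "h \<otimes> w = w \<otimes> h"
    by (simp_all add: centralizer_def)
  have "inv h \<otimes> w \<otimes> h = w"
    using w(1) h_carrier by (simp add: m_assoc flip: hw) (simp add: m_assoc[symmetric])
  have double: "inv (g \<otimes> h) \<otimes> x [^] (2 * r) \<otimes> (g \<otimes> h) = y [^] (2 * r)"
    and half: "inv (g \<otimes> h) \<otimes> x [^] (r * q) \<otimes> (g \<otimes> h) = y [^] (r * q)"
    using conj_by_mult[OF g(1) h_carrier] x g(2) conj_x h(2) \<open>inv h \<otimes> w \<otimes> h = w\<close>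
    by (simp_all add: w_def)
  have "inv (g \<otimes> h) \<otimes> x [^] r \<otimes> (g \<otimes> h) = y [^] r"
    by (rule conj_half_pow[OF m_closed[OF g(1) h_carrier] x y double half \<open>odd q\<close>])
  then show ?thesis
    unfolding conjugate_in_def using g(1) h_carrier by blast
qed

lemma double_dvd_of_mod_4_eq_2:
  fixes m k :: nat
  assumes "m mod 4 = 2" and "m dvd k" and "4 dvd k"
  shows "2 * m dvd k"
proof -
  obtain c where c: "k = m * c"
    using \<open>m dvd k\<close> by blast
  have "\<exists>a. m = 2 * (2 * a + 1)"
    using \<open>m mod 4 = 2\<close> by presburger
  then obtain a where a: "m = 2 * (2 * a + 1)" ..
  have "4 dvd 2 * ((2 * a + 1) * c)"
    using \<open>4 dvd k\<close> c a by (metis mult.assoc)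
  then have "even ((2 * a + 1) * c)"
    by presburger
  then have "even c"
    by simp
  then show ?thesis
    by (auto simp: c)
qed

locale minimal_conjugate_pows = group +
  fixes x y :: 'a and r s :: nat
  assumes finite_carrier: "finite (carrier G)"
    and x: "x \<in> carrier G" and y: "y \<in> carrier G"
    and r_gt_1: "r > 1" and s_gt_1: "s > 1" and coprime: "coprime r s"
    and conj_r: "conjugate_in G (x [^] r) (y [^] r)"
    and conj_s: "conjugate_in G (x [^] s) (y [^] s)"
    and minimal: "\<And>d. d \<in> proper_divisors r \<union> proper_divisors s \<Longrightarrow>
                        \<not> conjugate_in G (x [^] d) (y [^] d)"
begin

lemma swap_exponents: "minimal_conjugate_pows G x y s r"
  using finite_carrier x y r_gt_1 s_gt_1 coprime conj_r conj_s minimal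
  by unfold_locales (auto simp: coprime_commute)

lemma ord_y_eq: "ord y = ord x"
  using ord_eq_of_conjugate_coprime_pows[OF x y coprime conj_r conj_s] .

lemma r_dvd_ord: "r dvd ord x"
  using dvd_ord_of_conjugate_pow[OF x y ord_y_eq _ conj_r] r_gt_1 minimal by simp

lemma rs_dvd_ord: "r * s dvd ord x"
  using divides_mult[OF r_dvd_ord minimal_conjugate_pows.r_dvd_ord[OF swap_exponents] coprime] .

lemma rs_dvd_order: "r * s dvd order G"
  using rs_dvd_ord ord_dvd_group_order[OF x] by (rule dvd_trans)

lemma ord_neq_order: "ord x \<noteq> order G"
proof
  assume "ord x = order G"
  then interpret comm_group G
    using comm_group_of_ord_eq_order[OF finite_carrier x] by simp
  have "x = y"
    using eq_of_coprime_pows_eq[OF x y coprime] x conj_r conj_s by (simp add: conjugate_in_imp_eq)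
  moreover have "1 \<in> proper_divisors r"
    using r_gt_1 by (simp add: proper_divisors_def)
  ultimately show False
    using minimal[of 1] conjugate_in_refl[OF y] y by simp
qed

lemma order_neq_rs: "order G \<noteq> r * s"
  using rs_dvd_ord ord_dvd_group_order[OF x] ord_neq_order by (auto intro: dvd_antisym)

lemma not_conjugate_in_half_pow: "r = 2 * r' \<Longrightarrow> \<not> conjugate_in G (x [^] r') (y [^] r')"
  using minimal r_gt_1 by (auto simp: proper_divisors_def)

lemma order_neq_double_of_even_r:
  assumes r: "r = 2 * r'"
  shows "order G \<noteq> 2 * r * s"
proof
  assume order: "order G = 2 * r * s"
  obtain d where d: "ord x = r * s * d"
    using rs_dvd_ord by blast
  have "r * s * d dvd r * s * 2"
    using ord_dvd_group_order[OF x] order d by (simp add: mult.commute mult.left_commute)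
  then have "d dvd 2"
    using r_gt_1 s_gt_1 by simp
  then have "d = 1 \<or> d = 2"
    using dvd_imp_le[of d 2] by (auto simp: le_Suc_eq numeral_2_eq_2)
  then have n: "ord x = 2 * r' * s"
    using ord_neq_order order d r by auto
  have "odd s"
    using coprime r by simp
  have "conjugate_in G (x [^] r') (y [^] r')"
    using conjugate_in_half_pow_of_index_two[OF finite_carrier x y ord_y_eq _ n \<open>odd s\<close> _ conj_s]
      conj_r order n r by (simp add: mult.assoc)
  then show False
    using not_conjugate_in_half_pow[OF r] by contradiction
qed

lemma order_neq_double:
  assumes "even (r * s)"
  shows "order G \<noteq> 2 * r * s"
proof -
  consider "even r" | "even s"
    using assms by auto
  then show ?thesis
  proof cases
    case 1
    then obtain r' where "r = 2 * r'" ..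
    then show ?thesis
      by (rule order_neq_double_of_even_r)
  next
    case 2
    then obtain s' where "s = 2 * s'" ..
    then have "order G \<noteq> 2 * s * r"
      by (rule minimal_conjugate_pows.order_neq_double_of_even_r[OF swap_exponents])
    then show ?thesis
      by (simp add: mult.commute mult.left_commute)
  qed
qed

lemma double_dvd_order_of_even_r:
  assumes r: "r = 2 * r'" and mod4: "(r * s) mod 4 = 2"
  shows "2 * r * s dvd order G"
proof (rule ccontr)
  assume "\<not> 2 * r * s dvd order G"
  then have not4: "\<not> 4 dvd order G"
    using double_dvd_of_mod_4_eq_2[OF mod4 rs_dvd_order] by (auto simp: mult.assoc)
  obtain q where q: "ord x = r * q"
    using r_dvd_ord by blast
  have "odd q"
    using not4 ord_dvd_group_order[OF x] q r by (auto elim!: evenE intro: dvd_trans)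
  moreover have "ord x = 2 * r' * q"
    using q r by simp
  ultimately have "conjugate_in G (x [^] r') (y [^] r')"
    using conjugate_in_half_pow_of_not_four_dvd[OF finite_carrier not4 x y ord_y_eq _ _ conj_r[unfolded r]]
    by blast
  then show False
    using not_conjugate_in_half_pow[OF r] by contradiction
qed

lemma double_dvd_order:
  assumes "(r * s) mod 4 = 2"
  shows "2 * r * s dvd order G"
proof -
  have "even (r * s)"
    using assms by presburger
  then consider "even r" | "even s"
    by auto
  then show ?thesis
  proof cases
    case 1
    then obtain r' where "r = 2 * r'" ..
    then show ?thesis
      using double_dvd_order_of_even_r assms by blast
  next
    case 2
    then obtain s' where "s = 2 * s'" ..
    moreover have "(s * r) mod 4 = 2"
      using assms by (simp add: mult.commute)
    ultimately have "2 * s * r dvd order G"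
      by (rule minimal_conjugate_pows.double_dvd_order_of_even_r[OF swap_exponents])
    then show ?thesis
      by (simp add: mult.commute mult.left_commute)
  qed
qed

end

theorem theorem6p6:
  fixes G (structure) and r s :: nat and x y :: 'a
  assumes "group G" and "finite (carrier G)"
    and "r > 1" and "s > 1" and "coprime r s"
    and "x \<in> carrier G" and "y \<in> carrier G"
    and "conjugate_in G (x [^] r) (y [^] r)"
    and "conjugate_in G (x [^] s) (y [^] s)"
    and "\<And>d. d \<in> proper_divisors r \<union> proper_divisors s \<Longrightarrow>
            \<not> conjugate_in G (x [^] d) (y [^] d)"
  shows "r * s dvd order G \<and> order G \<noteq> r * s
         \<and> (even (r * s) \<longrightarrow> order G \<noteq> 2 * r * s)
         \<and> ((r * s) mod 4 = 2 \<longrightarrow> 2 * r * s dvd order G)"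
proof -
  interpret minimal_conjugate_pows G x y r s
    using assms by (simp add: minimal_conjugate_pows_def minimal_conjugate_pows_axioms_def)
  show ?thesis
    using rs_dvd_order order_neq_rs order_neq_double double_dvd_order by blast
qed

end
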